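(* Let $K$ be an infinite compact Hausdorff space. Then $sbiort_1(C(K))=hL(K)$, and consequently $hL(K)\leq sbiort(C(K))$.
   Context: For a Banach space $X$ and an ordinal $\alpha$, a transfinite sequence $(x_i,x_i^* )_{i<\alpha}\subseteq X\times X^*$ is semibiorthogonal if $x_i^*(x_i)=1$ for all $i$, $x_i^*(x_j)=0$ for $j<i<\alpha$, and $x_i^*(x_j)\geq0$ for $i<j<\alpha$. $sbiort(X)$ is the supremum of $|\alpha|$ over semibiorthogonal sequences of length $\alpha$. For $C(K)$ (continuous real functions, sup norm, dual = Radon measures), a measure is $1$-supported if it equals $a\delta_x$ for some $a\in\mathbb R$, $x\in K$; $sbiort_1(C(K))$ is the supremum of $|\alpha|$ over semibiorthogonal sequences $(f_i,\mu_i)_{i<\alpha}$ in $C(K)$ with every $\mu_i$ $1$-supported. $hL(K)=\sup\{L(Y):Y\subseteq K\}$, $L(Y)$ the least $\kappa$ such that every open cover of $Y$ has a subcover of size at most $\kappa$. *)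

theory Defs
  imports "HOL-Analysis.Analysis"
begin

(* A transfinite sequence of length alpha is indexed by the field of a well-order r
  (whose order type is alpha); its cardinality is card_of (Field r). *)

definition semibiorthogonal ::
  "'i rel \<Rightarrow> ('i \<Rightarrow> 'x::real_normed_vector) \<Rightarrow> ('i \<Rightarrow> 'x \<Rightarrow> real) \<Rightarrow> bool" where
  "semibiorthogonal r x xs \<longleftrightarrow>
     Well_order r \<and>
     (\<forall>i\<in>Field r. bounded_linear (xs i) \<and> xs i (x i) = 1) \<and>
     (\<forall>i\<in>Field r. \<forall>j\<in>Field r. (j, i) \<in> r \<and> j \<noteq> i \<longrightarrow> xs i (x j) = 0) \<and>
     (\<forall>i\<in>Field r. \<forall>j\<in>Field r. (i, j) \<in> r \<and> i \<noteq> j \<longrightarrow> xs i (x j) \<ge> 0)"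

(* Index sets are taken inside the type of C(K) itself,
  which is no restriction since i |-> x_i is injective for such sequences. *)

definition sbiort_ub :: "'a::topological_space itself \<Rightarrow> 'c set \<Rightarrow> bool" where
  "sbiort_ub K T \<longleftrightarrow>
     (\<forall>(r :: ('a \<Rightarrow>\<^sub>C real) rel) (f :: ('a \<Rightarrow>\<^sub>C real) \<Rightarrow> ('a \<Rightarrow>\<^sub>C real)) xs.
        semibiorthogonal r f xs \<longrightarrow> (card_of (Field r), card_of T) \<in> ordLeq)"

(* Same, restricted to 1-supported functionals a_i * delta_{p_i}. *)

definition sbiort1_ub :: "'a::topological_space itself \<Rightarrow> 'c set \<Rightarrow> bool" where
  "sbiort1_ub K T \<longleftrightarrow>
     (\<forall>(r :: ('a \<Rightarrow>\<^sub>C real) rel) (f :: ('a \<Rightarrow>\<^sub>C real) \<Rightarrow> ('a \<Rightarrow>\<^sub>C real))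
        (a :: ('a \<Rightarrow>\<^sub>C real) \<Rightarrow> real) (p :: ('a \<Rightarrow>\<^sub>C real) \<Rightarrow> 'a).
        semibiorthogonal r f (\<lambda>i g. a i * apply_bcontfun g (p i))
          \<longrightarrow> (card_of (Field r), card_of T) \<in> ordLeq)"

(* card_of T is an upper bound of L(Y) for all Y \<subseteq> K, i.e. of hL(K). *)

definition hL_ub :: "'a::topological_space itself \<Rightarrow> 'c set \<Rightarrow> bool" where
  "hL_ub K T \<longleftrightarrow>
     (\<forall>(Y :: 'a set) \<U>. (\<forall>U\<in>\<U>. open U) \<and> Y \<subseteq> \<Union>\<U> \<longrightarrow>
        (\<exists>\<V>\<subseteq>\<U>. Y \<subseteq> \<Union>\<V> \<and> (card_of \<V>, card_of T) \<in> ordLeq))"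

end

theory Submission
  imports Defs
begin

(* - hL(K) <= sbiort_1: given an open cover of Y, well-order it and keep only the members
     that contain a point of Y not covered by any earlier member.  These still cover Y, and
     the witness points are right-separated by them; Urysohn bumps at these points, paired
     with the point evaluations there, form a semibiorthogonal sequence indexed by the kept
     members.
   - sbiort_1 <= hL(K): if (f_i, a_i delta_{p_i}) is semibiorthogonal, the cozero sets of
     the f_i make (p_i) a right-separated sequence, and every right-separated sequence has
     length at most hL(K) when hL(K) is infinite (which it is, K being infinite). *)

context includes cardinal_syntax begin

lemma semibiorthogonalD:
  assumes "semibiorthogonal r x xs"
  shows semibiorthogonal_Well_order: "Well_order r"
    and semibiorthogonal_bounded_linear: "\<And>i. i \<in> Field r \<Longrightarrow> bounded_linear (xs i)"
    and semibiorthogonal_diag: "\<And>i. i \<in> Field r \<Longrightarrow> xs i (x i) = 1"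
    and semibiorthogonal_below: "\<And>i j. i \<in> Field r \<Longrightarrow> j \<in> Field r \<Longrightarrow> (j, i) \<in> r \<Longrightarrow> j \<noteq> i \<Longrightarrow> xs i (x j) = 0"
    and semibiorthogonal_above: "\<And>i j. i \<in> Field r \<Longrightarrow> j \<in> Field r \<Longrightarrow> (i, j) \<in> r \<Longrightarrow> i \<noteq> j \<Longrightarrow> xs i (x j) \<ge> 0"
  using assms unfolding semibiorthogonal_def by auto

lemma semibiorthogonal_total:
  assumes "semibiorthogonal r x xs" "i \<in> Field r" "j \<in> Field r"
  shows "(i, j) \<in> r \<or> (j, i) \<in> r"
  using assms(2,3) wo_rel.TOTALS[of r] semibiorthogonal_Well_order[OF assms(1)]
  unfolding wo_rel_def by blast

(* The vectors of a semibiorthogonal sequence are pairwise distinct: if x_i = x_j with j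
   before i, then 1 = xs_i(x_i) = xs_i(x_j) = 0. *)
lemma semibiorthogonal_inj:
  assumes sb: "semibiorthogonal r x xs"
  shows "inj_on x (Field r)"
proof (rule inj_onI, rule ccontr)
  fix i j assume ij: "i \<in> Field r" "j \<in> Field r" "x i = x j" "i \<noteq> j"
  consider "(i, j) \<in> r" | "(j, i) \<in> r" using semibiorthogonal_total[OF sb ij(1,2)] by blast
  then show False
  proof cases
    case 1 then show False
      using semibiorthogonal_diag[OF sb ij(2)] semibiorthogonal_below[OF sb ij(2,1)] ij(3,4) by simp
  next
    case 2 then show False
      using semibiorthogonal_diag[OF sb ij(1)] semibiorthogonal_below[OF sb ij(1,2)] ij(3,4) by simp
  qed
qed

(* Reindexing a semibiorthogonal sequence by its own vectors: this transports it from an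
   arbitrary index type to the type of the space itself. *)
lemma semibiorthogonal_dir_image:
  assumes sb: "semibiorthogonal r x xs"
  shows "semibiorthogonal (dir_image r x) (\<lambda>y. y) (\<lambda>y. xs (inv_into (Field r) x y))"
proof -
  let ?\<iota> = "inv_into (Field r) x"
  have inj: "inj_on x (Field r)" by (rule semibiorthogonal_inj[OF sb])
  have \<iota>: "\<And>i. i \<in> Field r \<Longrightarrow> ?\<iota> (x i) = i" using inj by simp
  have pairs: "\<exists>i j. (i, j) \<in> r \<and> i \<in> Field r \<and> j \<in> Field r \<and> u = x i \<and> v = x j"
    if uv: "(u, v) \<in> dir_image r x" for u v
  proof -
    obtain i j where "(i, j) \<in> r" "u = x i" "v = x j" using uv unfolding dir_image_def by blast
    then show ?thesis by (blast intro: FieldI1 FieldI2)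
  qed
  show ?thesis
    unfolding semibiorthogonal_def dir_image_Field
  proof (intro conjI ballI impI)
    show "well_order_on (x ` Field r) (dir_image r x)"
      using Well_order_dir_image[OF semibiorthogonal_Well_order[OF sb] inj]
      by (simp add: dir_image_Field)
  next
    fix u assume "u \<in> x ` Field r"
    then obtain i where i: "i \<in> Field r" "u = x i" by blast
    then show "bounded_linear (xs (?\<iota> u))"
      using semibiorthogonal_bounded_linear[OF sb i(1)] \<iota> i by simp
    show "xs (?\<iota> u) u = 1" using semibiorthogonal_diag[OF sb i(1)] \<iota> i by simp
  next
    fix u v assume "v \<in> x ` Field r" "u \<in> x ` Field r" and uv: "(u, v) \<in> dir_image r x \<and> u \<noteq> v"
    obtain i j where ij: "(i, j) \<in> r" "i \<in> Field r" "j \<in> Field r" "u = x i" "v = x j" "i \<noteq> j"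
      using pairs[OF conjunct1[OF uv]] conjunct2[OF uv] by blast
    show "xs (?\<iota> v) u = 0" using semibiorthogonal_below[OF sb ij(3,2,1,6)] \<iota>[OF ij(3)] ij(4,5) by simp
  next
    fix u v assume "u \<in> x ` Field r" "v \<in> x ` Field r" and uv: "(u, v) \<in> dir_image r x \<and> u \<noteq> v"
    obtain i j where ij: "(i, j) \<in> r" "i \<in> Field r" "j \<in> Field r" "u = x i" "v = x j" "i \<noteq> j"
      using pairs[OF conjunct1[OF uv]] conjunct2[OF uv] by blast
    show "xs (?\<iota> u) v \<ge> 0" using semibiorthogonal_above[OF sb ij(2,3,1,6)] \<iota>[OF ij(2)] ij(4,5) by simp
  qed
qed

(* The definition of sbiort1_ub only quantifies over sequences indexed inside C(K); by the
   reindexing above the bound applies to sequences with an arbitrary index type. *)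
lemma sbiort1_ub_bounds_any_index:
  fixes r :: "'i rel" and f :: "'i \<Rightarrow> ('a::topological_space \<Rightarrow>\<^sub>C real)"
  assumes ub: "sbiort1_ub TYPE('a) T"
    and sb: "semibiorthogonal r f (\<lambda>i g. a i * apply_bcontfun g (p i))"
  shows "|Field r| \<le>o |T|"
proof -
  let ?\<iota> = "inv_into (Field r) f"
  have "semibiorthogonal (dir_image r f) (\<lambda>g. g)
      (\<lambda>h g. (a \<circ> ?\<iota>) h * apply_bcontfun g ((p \<circ> ?\<iota>) h))"
    using semibiorthogonal_dir_image[OF sb] by simp
  then have "|Field (dir_image r f)| \<le>o |T|"
    using ub unfolding sbiort1_ub_def by blast
  moreover have "|Field r| =o |Field (dir_image r f)|"
    using card_of_ordIso[THEN iffD1, OF exI, OF dir_image_bij_betw[OF semibiorthogonal_inj[OF sb]]] .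
  ultimately show ?thesis using ordIso_ordLeq_trans by blast
qed

lemma bounded_linear_scaled_point_eval:
  "bounded_linear (\<lambda>g::'a::topological_space \<Rightarrow>\<^sub>C real. c * apply_bcontfun g x)"
proof (rule bounded_linear_intro[where K="\<bar>c\<bar>"])
  fix g h :: "'a \<Rightarrow>\<^sub>C real" and t :: real
  show "c * apply_bcontfun (g + h) x = c * apply_bcontfun g x + c * apply_bcontfun h x"
    by (simp add: algebra_simps)
  show "c * apply_bcontfun (t *\<^sub>R g) x = t *\<^sub>R (c * apply_bcontfun g x)"
    by (simp add: algebra_simps)
  have "norm (apply_bcontfun g x) \<le> norm g" by (rule norm_bounded)
  then show "norm (c * apply_bcontfun g x) \<le> norm g * \<bar>c\<bar>"
    by (simp add: abs_mult mult.commute mult_left_mono)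
qed

lemma urysohn_bump:
  fixes U :: "'a::t2_space set"
  assumes "compact (UNIV::'a set)" "open U" "p \<in> U"
  obtains g :: "'a \<Rightarrow>\<^sub>C real" where "apply_bcontfun g p = 1" "\<And>x. apply_bcontfun g x \<ge> 0"
    "\<And>x. x \<notin> U \<Longrightarrow> apply_bcontfun g x = 0"
proof -
  have "compact_space (euclidean::'a topology)"
    using assms(1) by (simp add: compact_space_def)
  moreover have "Hausdorff_space (euclidean::'a topology)"
    unfolding Hausdorff_space_def disjnt_def by (simp add: separation_t2)
  ultimately have "normal_space (euclidean::'a topology)"
    by (simp add: compact_Hausdorff_or_regular_imp_normal_space)
  then obtain f where f: "continuous_map euclidean (top_of_set {0..1::real}) f"
      "f ` (-U) \<subseteq> {0}" "f ` {p} \<subseteq> {1}"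
    using Urysohn_lemma[of euclidean "-U" "{p}" 0 1] assms
    by (auto simp: disjnt_def closed_Compl)
  have cont: "continuous_on UNIV f" and range: "\<And>x. f x \<in> {0..1}"
    using f(1) by (auto simp: continuous_map_in_subtopology)
  have "f \<in> bcontfun"
    by (rule bcontfun_normI[OF cont, of 1]) (use range in auto)
  then have "apply_bcontfun (Bcontfun f) = f" by (simp add: Bcontfun_inverse)
  then show ?thesis
    using that[of "Bcontfun f"] f range by auto
qed

lemma well_ordered_cover_first_members:
  assumes w: "well_order_on \<U> w" and cov: "Y \<subseteq> \<Union>\<U>"
  obtains S pt where "S \<subseteq> \<U>" "Y \<subseteq> \<Union>S" "\<And>U. U \<in> S \<Longrightarrow> pt U \<in> U"
    "\<And>U V. U \<in> S \<Longrightarrow> V \<in> S \<Longrightarrow> (V, U) \<in> w \<Longrightarrow> V \<noteq> U \<Longrightarrow> pt U \<notin> V"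
proof -
  define S where "S = {U \<in> \<U>. \<exists>y\<in>Y. y \<in> U \<and> (\<forall>V\<in>\<U>. (V, U) \<in> w \<and> V \<noteq> U \<longrightarrow> y \<notin> V)}"
  have cover: "Y \<subseteq> \<Union>S"
  proof
    fix y assume y: "y \<in> Y"
    then obtain U0 where U0: "U0 \<in> {U \<in> \<U>. y \<in> U}" using cov by blast
    have "wf (w - Id)" using w by (simp add: well_order_on_def)
    then obtain U where U: "U \<in> {U \<in> \<U>. y \<in> U}"
      and min: "\<And>V. (V, U) \<in> w - Id \<Longrightarrow> V \<notin> {U \<in> \<U>. y \<in> U}"
      using wfE_min[OF _ U0] by blast
    then have "U \<in> S" using y by (auto simp: S_def)
    then show "y \<in> \<Union>S" using U by blast
  qed
  have "\<forall>U\<in>S. \<exists>y. y \<in> U \<and> (\<forall>V\<in>\<U>. (V, U) \<in> w \<and> V \<noteq> U \<longrightarrow> y \<notin> V)"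
    by (auto simp: S_def)
  from bchoice[OF this] obtain pt
    where pt: "\<forall>U\<in>S. pt U \<in> U \<and> (\<forall>V\<in>\<U>. (V, U) \<in> w \<and> V \<noteq> U \<longrightarrow> pt U \<notin> V)"
    by blast
  have "S \<subseteq> \<U>" by (auto simp: S_def)
  with cover pt show ?thesis
    by (intro that[of S pt]) (simp_all, blast+)
qed

(* In a compact Hausdorff space, a right-separated sequence of points (p_i lies in the open
   set W_i, but in no W_j with j before i) yields a semibiorthogonal sequence: Urysohn
   bumps for p_i inside W_i, paired with the point evaluations at p_i. *)
lemma right_separated_semibiorthogonal:
  fixes W :: "'i \<Rightarrow> 'a::t2_space set" and p :: "'i \<Rightarrow> 'a"
  assumes cpt: "compact (UNIV :: 'a set)" and wo: "Well_order r"
    and opn: "\<And>i. i \<in> Field r \<Longrightarrow> open (W i)"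
    and mem: "\<And>i. i \<in> Field r \<Longrightarrow> p i \<in> W i"
    and sep: "\<And>i j. i \<in> Field r \<Longrightarrow> j \<in> Field r \<Longrightarrow> (j, i) \<in> r \<Longrightarrow> j \<noteq> i \<Longrightarrow> p i \<notin> W j"
  obtains \<phi> :: "'i \<Rightarrow> 'a \<Rightarrow>\<^sub>C real"
  where "semibiorthogonal r \<phi> (\<lambda>i g. 1 * apply_bcontfun g (p i))"
proof -
  have "\<forall>i\<in>Field r. \<exists>g::'a \<Rightarrow>\<^sub>C real. apply_bcontfun g (p i) = 1 \<and> (\<forall>x. apply_bcontfun g x \<ge> 0)
      \<and> (\<forall>x. x \<notin> W i \<longrightarrow> apply_bcontfun g x = 0)"
  proof
    fix i assume i: "i \<in> Field r"
    obtain g :: "'a \<Rightarrow>\<^sub>C real" where "apply_bcontfun g (p i) = 1"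
        "\<And>x. apply_bcontfun g x \<ge> 0" "\<And>x. x \<notin> W i \<Longrightarrow> apply_bcontfun g x = 0"
      using urysohn_bump[OF cpt opn[OF i] mem[OF i]] by blast
    then show "\<exists>g::'a \<Rightarrow>\<^sub>C real. apply_bcontfun g (p i) = 1 \<and> (\<forall>x. apply_bcontfun g x \<ge> 0)
      \<and> (\<forall>x. x \<notin> W i \<longrightarrow> apply_bcontfun g x = 0)" by blast
  qed
  from bchoice[OF this] obtain \<phi> :: "'i \<Rightarrow> 'a \<Rightarrow>\<^sub>C real"
    where \<phi>: "\<forall>i\<in>Field r. apply_bcontfun (\<phi> i) (p i) = 1 \<and> (\<forall>x. apply_bcontfun (\<phi> i) x \<ge> 0)
      \<and> (\<forall>x. x \<notin> W i \<longrightarrow> apply_bcontfun (\<phi> i) x = 0)"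
    by blast
  have "semibiorthogonal r \<phi> (\<lambda>i g. 1 * apply_bcontfun g (p i))"
    unfolding semibiorthogonal_def
  proof (intro conjI ballI impI)
    show "Well_order r" by (rule wo)
  next
    fix i assume "i \<in> Field r"
    show "bounded_linear (\<lambda>g::'a \<Rightarrow>\<^sub>C real. 1 * apply_bcontfun g (p i))"
      by (rule bounded_linear_scaled_point_eval)
    show "1 * apply_bcontfun (\<phi> i) (p i) = 1" using \<phi> \<open>i \<in> Field r\<close> by simp
  next
    fix i j assume "i \<in> Field r" "j \<in> Field r" "(j, i) \<in> r \<and> j \<noteq> i"
    then have "p i \<notin> W j" using sep[OF \<open>i \<in> Field r\<close> \<open>j \<in> Field r\<close>] by blast
    then show "1 * apply_bcontfun (\<phi> j) (p i) = 0" using \<phi> \<open>j \<in> Field r\<close> by simp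
  next
    fix i j assume "i \<in> Field r" "j \<in> Field r"
    then show "1 * apply_bcontfun (\<phi> j) (p i) \<ge> 0" using \<phi> by simp
  qed
  then show ?thesis by (rule that)
qed

(* hL(K) <= sbiort_1(C(K)): the kept members of a well-ordered cover, with their witness
   points, form a right-separated sequence, whose length sbiort_1 bounds. *)
lemma sbiort1_ub_imp_hL_ub:
  assumes cpt: "compact (UNIV :: 'a::t2_space set)" and ub: "sbiort1_ub TYPE('a) T"
  shows "hL_ub TYPE('a) T"
  unfolding hL_ub_def
proof (intro allI impI)
  fix Y :: "'a set" and \<U> :: "'a set set"
  assume "(\<forall>U\<in>\<U>. open U) \<and> Y \<subseteq> \<Union>\<U>"
  then have opn: "\<And>U. U \<in> \<U> \<Longrightarrow> open U" and cov: "Y \<subseteq> \<Union>\<U>" by auto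
  obtain w where w: "well_order_on \<U> w" using well_order_on by blast
  obtain S pt where S: "S \<subseteq> \<U>" "Y \<subseteq> \<Union>S" and pt: "\<And>U. U \<in> S \<Longrightarrow> pt U \<in> U"
    and sep: "\<And>U V. U \<in> S \<Longrightarrow> V \<in> S \<Longrightarrow> (V, U) \<in> w \<Longrightarrow> V \<noteq> U \<Longrightarrow> pt U \<notin> V"
    using well_ordered_cover_first_members[OF w cov] by blast
  define R where "R = Restr w S"
  have R_wo: "well_order_on S R"
  proof -
    have "\<U> = Field w \<and> Well_order w" by (rule well_order_on_Well_order[OF w])
    then show ?thesis
      unfolding R_def using well_order_on_Restr[of w S] S(1) by simp
  qed
  then have FR: "Field R = S" and WR: "Well_order R"
    using well_order_on_Well_order[OF R_wo] by simp_all
  obtain \<phi> where "semibiorthogonal R \<phi> (\<lambda>U g. 1 * apply_bcontfun g (pt U))"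
  proof (rule right_separated_semibiorthogonal[OF cpt WR, of "\<lambda>U. U"])
    show "open U" "pt U \<in> U" if "U \<in> Field R" for U
      using that opn pt S(1) unfolding FR by auto
    show "pt U \<notin> V" if "U \<in> Field R" "V \<in> Field R" "(V, U) \<in> R" "V \<noteq> U" for U V
      using that sep[of U V] unfolding FR R_def by blast
  qed
  then have "|Field R| \<le>o |T|" by (rule sbiort1_ub_bounds_any_index[OF ub])
  then have "|S| \<le>o |T|" by (simp only: FR)
  then show "\<exists>\<V>\<subseteq>\<U>. Y \<subseteq> \<Union>\<V> \<and> |\<V>| \<le>o |T|" using S by blast
qed

(* In an infinite T1 space hL is infinite: n + 1 points, each isolated from the others by
   an open set, need n + 1 sets to be covered. *)
lemma hL_ub_imp_infinite:
  assumes inf: "infinite (UNIV :: 'a::t1_space set)" and hl: "hL_ub TYPE('a) T"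
  shows "infinite T"
proof
  assume fin: "finite T"
  obtain Y :: "'a set" where Y: "finite Y" "card Y = Suc (card T)"
    using infinite_arbitrarily_large[OF inf] by blast
  define h where "h y = - (Y - {y})" for y
  have h_Y: "h y \<inter> Y = {y}" if "y \<in> Y" for y
    using that by (auto simp: h_def)
  have "open (h y)" for y
    unfolding h_def by (intro open_Compl finite_imp_closed) (use Y(1) in auto)
  then have "(\<forall>U\<in>h ` Y. open U) \<and> Y \<subseteq> \<Union>(h ` Y)"
    by (auto simp: h_def)
  then obtain \<V> where V: "\<V> \<subseteq> h ` Y" "Y \<subseteq> \<Union>\<V>" "|\<V>| \<le>o |T|"
    using hl[unfolded hL_ub_def, rule_format, of "h ` Y" Y] by blast
  have "inj_on h Y"
  proof (rule inj_onI)
    fix x y assume "x \<in> Y" "y \<in> Y" "h x = h y"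
    then have "{x} = {y}" using h_Y[OF \<open>x \<in> Y\<close>] h_Y[OF \<open>y \<in> Y\<close>] by metis
    then show "x = y" by simp
  qed
  moreover have "h ` Y \<subseteq> \<V>"
  proof
    fix U assume "U \<in> h ` Y"
    then obtain y where y: "y \<in> Y" "U = h y" by blast
    then obtain V where V': "V \<in> \<V>" "y \<in> V" using V(2) by blast
    then obtain y' where y': "y' \<in> Y" "V = h y'" using V(1) by blast
    then have "y \<in> {y'}" using h_Y[OF y'(1)] y(1) V'(2) by blast
    then show "U \<in> \<V>" using y y' V'(1) by simp
  qed
  ultimately have "|Y| \<le>o |\<V>|"
    using card_of_ordLeq[THEN iffD1, OF exI[of _ h]] by blast
  then have "|Y| \<le>o |T|" using V(3) by (rule ordLeq_transitive)
  then obtain g where "inj_on g Y" "g ` Y \<subseteq> T" using card_of_ordLeq[THEN iffD2] by blast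
  then have "card Y \<le> card T" using card_inj_on_le fin by blast
  then show False using Y(2) by simp
qed

(* If T is infinite and at most |T| indices have an initial segment of size <= |T|, then
   all of them do: the least exception would have all its predecessors among those
   indices. *)
lemma small_initial_segments_bound:
  assumes wo: "Well_order r" and infT: "infinite T"
    and small: "|{i \<in> Field r. |under r i| \<le>o |T|}| \<le>o |T|"
  shows "|Field r| \<le>o |T|"
proof -
  define Z where "Z = {i \<in> Field r. |under r i| \<le>o |T|}"
  have "Field r \<subseteq> Z"
  proof (rule ccontr)
    assume "\<not> Field r \<subseteq> Z"
    then obtain i where i: "i \<in> Field r - Z" by blast
    have "wf (r - Id)" using wo by (simp add: well_order_on_def)
    then obtain i0 where i0: "i0 \<in> Field r - Z" and min: "\<And>j. (j, i0) \<in> r - Id \<Longrightarrow> j \<notin> Field r - Z"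
      using wfE_min[OF _ i] by blast
    have "under r i0 \<subseteq> Z \<union> {i0}"
      using min by (auto simp: under_def intro: FieldI1)
    moreover have "|Z \<union> {i0}| \<le>o |T|"
    proof (rule card_of_Un_ordLeq_infinite_Field)
      show "|{i0}| \<le>o |T|" using infT card_of_singl_ordLeq[of T i0] by auto
    qed (use infT small in \<open>simp_all add: Z_def Field_card_of card_of_card_order_on\<close>)
    ultimately have "|under r i0| \<le>o |T|" using card_of_mono1 ordLeq_transitive by blast
    then show False using i0 by (simp add: Z_def)
  qed
  then show ?thesis using card_of_mono1 small ordLeq_transitive unfolding Z_def by blast
qed

(* A right-separated sequence (p_i lies in the open set W_i, but in no W_j with j before i)
   has length at most an infinite bound of hL: a subcover of the W_i on the indices with
   small initial segments shows that there are few such indices, since each of them lies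
   below some index of the subcover. *)
lemma right_separated_card_le_hL:
  fixes W :: "'i \<Rightarrow> 'a::topological_space set" and p :: "'i \<Rightarrow> 'a"
  assumes hl: "hL_ub TYPE('a) T" and infT: "infinite T" and wo: "Well_order r"
    and opn: "\<And>i. i \<in> Field r \<Longrightarrow> open (W i)"
    and mem: "\<And>i. i \<in> Field r \<Longrightarrow> p i \<in> W i"
    and sep: "\<And>i j. i \<in> Field r \<Longrightarrow> j \<in> Field r \<Longrightarrow> (j, i) \<in> r \<Longrightarrow> j \<noteq> i \<Longrightarrow> p i \<notin> W j"
  shows "|Field r| \<le>o |T|"
proof -
  define Z where "Z = {i \<in> Field r. |under r i| \<le>o |T|}"
  have "(\<forall>U\<in>W ` Z. open U) \<and> p ` Z \<subseteq> \<Union>(W ` Z)"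
    using opn mem by (auto simp: Z_def)
  then obtain \<V> where V: "\<V> \<subseteq> W ` Z" "p ` Z \<subseteq> \<Union>\<V>" "|\<V>| \<le>o |T|"
    using hl[unfolded hL_ub_def, rule_format, of "W ` Z" "p ` Z"] by blast
  define S where "S = inv_into Z W ` \<V>"
  have SZ: "S \<subseteq> Z" using V(1) by (auto simp: S_def inv_into_into)
  have OS: "W ` S = \<V>" using V(1) by (force simp: S_def f_inv_into_f)
  have ST: "|S| \<le>o |T|" using card_of_image V(3) ordLeq_transitive unfolding S_def by blast
  have "Z \<subseteq> (\<Union>s\<in>S. under r s)"
  proof
    fix z assume z: "z \<in> Z"
    then obtain s where s: "s \<in> S" "p z \<in> W s" using V(2) OS by blast
    have zs: "z \<in> Field r" "s \<in> Field r" using z s(1) SZ by (auto simp: Z_def)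
    have "(z, s) \<in> r"
    proof (rule ccontr)
      assume "(z, s) \<notin> r"
      moreover have "(z, s) \<in> r \<or> (s, z) \<in> r"
        using zs wo wo_rel.TOTALS[of r] unfolding wo_rel_def by blast
      ultimately have "(s, z) \<in> r" "s \<noteq> z" using zs wo by (auto simp: order_on_defs refl_on_def)
      then show False using sep[OF zs(1,2)] s(2) by blast
    qed
    then show "z \<in> (\<Union>s\<in>S. under r s)" using s(1) by (auto simp: under_def)
  qed
  moreover have "|\<Union>s\<in>S. under r s| \<le>o |T|"
    using card_of_UNION_ordLeq_infinite[OF infT ST] SZ by (auto simp: Z_def)
  ultimately have "|Z| \<le>o |T|" using card_of_mono1 ordLeq_transitive by blast
  then show ?thesis using small_initial_segments_bound[OF wo infT] unfolding Z_def by blast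
qed

(* sbiort_1(C(K)) <= hL(K): for a semibiorthogonal sequence (f_i, a_i delta_{p_i}) the
   points p_i are right-separated by the cozero sets of the f_i. *)
lemma hL_ub_imp_sbiort1_ub:
  assumes inf: "infinite (UNIV :: 'a::t1_space set)" and hl: "hL_ub TYPE('a) T"
  shows "sbiort1_ub TYPE('a) T"
  unfolding sbiort1_ub_def
proof (intro allI impI)
  fix r :: "('a \<Rightarrow>\<^sub>C real) rel" and f :: "('a \<Rightarrow>\<^sub>C real) \<Rightarrow> ('a \<Rightarrow>\<^sub>C real)"
    and a :: "('a \<Rightarrow>\<^sub>C real) \<Rightarrow> real" and p :: "('a \<Rightarrow>\<^sub>C real) \<Rightarrow> 'a"
  assume sb: "semibiorthogonal r f (\<lambda>i g. a i * apply_bcontfun g (p i))"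
  define W where "W i = {x. apply_bcontfun (f i) x \<noteq> 0}" for i
  have diag: "a i * apply_bcontfun (f i) (p i) = 1" if "i \<in> Field r" for i
    using semibiorthogonal_diag[OF sb that] by simp
  show "|Field r| \<le>o |T|"
  proof (rule right_separated_card_le_hL[OF hl hL_ub_imp_infinite[OF inf hl]
        semibiorthogonal_Well_order[OF sb]])
    show "open (W i)" for i
      unfolding W_def by (intro open_Collect_neq continuous_on_apply_bcontfun continuous_on_const)
    show "p i \<in> W i" if "i \<in> Field r" for i
      using diag[OF that] by (auto simp: W_def)
    show "p i \<notin> W j" if "i \<in> Field r" "j \<in> Field r" "(j, i) \<in> r" "j \<noteq> i" for i j
    proof -
      have "a i \<noteq> 0" using diag[OF that(1)] by auto
      moreover have "a i * apply_bcontfun (f j) (p i) = 0"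
        using semibiorthogonal_below[OF sb that] by simp
      ultimately show ?thesis by (simp add: W_def)
    qed
  qed
qed

lemma sbiort_ub_imp_sbiort1_ub:
  "sbiort_ub TYPE('a::topological_space) T \<Longrightarrow> sbiort1_ub TYPE('a) T"
  unfolding sbiort_ub_def sbiort1_ub_def by blast

end

theorem mainTheorem16:
  fixes T :: "'c set"
  assumes "compact (UNIV :: 'a::t2_space set)"
    and "infinite (UNIV :: 'a set)"
  shows "(sbiort1_ub TYPE('a) T \<longleftrightarrow> hL_ub TYPE('a) T) \<and>
         (sbiort_ub TYPE('a) T \<longrightarrow> hL_ub TYPE('a) T)"
  using sbiort1_ub_imp_hL_ub[OF assms(1)] hL_ub_imp_sbiort1_ub[OF assms(2)]
    sbiort_ub_imp_sbiort1_ub by blast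

end
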